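(* For any $d\ge1$, $T\ge1$ and any unit vectors $|\psi_1\rangle,\dots,|\psi_T\rangle\in\mathbb{C}^d$, $$\sum_{\pi\in S_T}\mathrm{Tr}\!\left(\pi\bigotimes_{t=1}^T|\psi_t\rangle\langle\psi_t|\right)\ \ge\ 1.$$
   Context: $S_T$ is the symmetric group on $T$ letters. For $\pi\in S_T$, the corresponding permutation operator on $(\mathbb{C}^d)^{\otimes T}$ (also denoted $\pi$) is the linear map with $\pi(|v_1\rangle\otimes\cdots\otimes|v_T\rangle)=|v_{\pi^{-1}(1)}\rangle\otimes\cdots\otimes|v_{\pi^{-1}(T)}\rangle$. *)

theory Defs
  imports "HOL-Analysis.Analysis" "HOL-Library.Complex_Order" "HOL-Combinatorics.Permutations"
begin

text \<open>Computational basis of (C^d)^{\<otimes>T}: index tuples j : {0..<T} \<rightarrow> {0..<d}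
  (extensional functions). Operators are matrices indexed by such tuples.
  Tensor factors are numbered 0..T-1 instead of 1..T.\<close>

definition idx :: "nat \<Rightarrow> nat \<Rightarrow> (nat \<Rightarrow> nat) set" where
  "idx d T = PiE {..<T} (\<lambda>_. {..<d})"

definition op_mult :: "nat \<Rightarrow> nat \<Rightarrow> ((nat \<Rightarrow> nat) \<Rightarrow> (nat \<Rightarrow> nat) \<Rightarrow> complex)
    \<Rightarrow> ((nat \<Rightarrow> nat) \<Rightarrow> (nat \<Rightarrow> nat) \<Rightarrow> complex) \<Rightarrow> (nat \<Rightarrow> nat) \<Rightarrow> (nat \<Rightarrow> nat) \<Rightarrow> complex" where
  "op_mult d T A B i j = (\<Sum>k\<in>idx d T. A i k * B k j)"

definition op_trace :: "nat \<Rightarrow> nat \<Rightarrow> ((nat \<Rightarrow> nat) \<Rightarrow> (nat \<Rightarrow> nat) \<Rightarrow> complex) \<Rightarrow> complex" where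
  "op_trace d T A = (\<Sum>i\<in>idx d T. A i i)"

text \<open>Permutation operator: pi maps basis vector |j> = e_{j 0} \<otimes> ... \<otimes> e_{j (T-1)}
  to the basis vector with t-th factor e_{j (inv pi t)}.\<close>
definition perm_op :: "nat \<Rightarrow> (nat \<Rightarrow> nat) \<Rightarrow> (nat \<Rightarrow> nat) \<Rightarrow> (nat \<Rightarrow> nat) \<Rightarrow> complex" where
  "perm_op T \<pi> i j = (if i = restrict (j \<circ> inv \<pi>) {..<T} then 1 else 0)"

definition tensor_proj :: "nat \<Rightarrow> (nat \<Rightarrow> nat \<Rightarrow> complex) \<Rightarrow> (nat \<Rightarrow> nat) \<Rightarrow> (nat \<Rightarrow> nat) \<Rightarrow> complex" where
  "tensor_proj T \<psi> i j = (\<Prod>t<T. \<psi> t (i t) * cnj (\<psi> t (j t)))"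

end

theory Submission
  imports Defs
begin

text \<open>The trace of pi composed with the tensor product of the projections is
  prod_t <psi_t, psi_(pi t)>, so the sum is the permanent of the Gram matrix of the psi_t and
  the claim is per G \<ge> prod_t G_tt for Gram matrices G.  Expanding the permanent of
  n + 1 vectors f_0, ..., f_n along f_n gives <f_n, f_n> times the permanent of the first n
  vectors plus a remainder.  The remainder is a Hermitian form
  sum_(i,i') c_i cnj(c_i') per(G_(i,i')) with c_i = <f_i, f_n>, where G_(i,i') is the cross
  Gram matrix of f_0, ..., f_(n-1) with f_i resp. f_i' replaced by a fresh unit vector
  orthogonal to all of them.  Such forms are nonnegative because n! per(G_(i,i')) is the
  inner product of the two symmetrized tensors.\<close>

definition cinner :: "nat \<Rightarrow> (nat \<Rightarrow> complex) \<Rightarrow> (nat \<Rightarrow> complex) \<Rightarrow> complex" where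
  "cinner d x y = (\<Sum>j<d. x j * cnj (y j))"

definition gram_permanent ::
    "nat \<Rightarrow> nat \<Rightarrow> (nat \<Rightarrow> nat \<Rightarrow> complex) \<Rightarrow> (nat \<Rightarrow> nat \<Rightarrow> complex) \<Rightarrow> complex" where
  "gram_permanent d n F H = (\<Sum>q\<in>{q. q permutes {..<n}}. \<Prod>t<n. cinner d (F t) (H (q t)))"

definition symmetrized_tensor :: "nat \<Rightarrow> (nat \<Rightarrow> nat \<Rightarrow> complex) \<Rightarrow> (nat \<Rightarrow> nat) \<Rightarrow> complex" where
  "symmetrized_tensor n H k = (\<Sum>q\<in>{q. q permutes {..<n}}. \<Prod>t<n. H (q t) (k t))"

lemma cinner_cnj: "cinner d y x = cnj (cinner d x y)"
  unfolding cinner_def by (simp add: cnj_sum mult.commute)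

lemma cnj_mult_self_nonneg: "0 \<le> (z::complex) * cnj z"
  by (simp add: complex_mult_cnj less_eq_complex_def)

lemma cinner_self_nonneg: "0 \<le> cinner d x x"
  unfolding cinner_def by (intro sum_nonneg cnj_mult_self_nonneg)

lemma cinner_self_eq_norm_sum: "cinner d x x = of_real (\<Sum>j<d. (cmod (x j))\<^sup>2)"
  unfolding cinner_def of_real_sum by (simp only: complex_norm_square)

lemma finite_idx [simp]: "finite (idx d n)"
  unfolding idx_def by (rule finite_PiE) auto

lemma comp_permutes_in_idx:
  assumes "s permutes {..<n}" and "k \<in> idx d n"
  shows "k \<circ> s \<in> idx d n"
  using assms permutes_in_image[OF assms(1)] permutes_not_in[OF assms(1)]
  unfolding idx_def by (auto simp: PiE_def extensional_def Pi_def)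

lemma symmetrized_tensor_comp_permutes:
  assumes s: "s permutes {..<n}"
  shows "symmetrized_tensor n H (k \<circ> s) = symmetrized_tensor n H k"
proof -
  have "symmetrized_tensor n H (k \<circ> s)
      = (\<Sum>q\<in>{q. q permutes {..<n}}. \<Prod>t<n. H ((q \<circ> s) t) (k (s t)))"
    unfolding symmetrized_tensor_def by (subst sum_permutations_compose_right[OF s]) simp
  also have "\<dots> = symmetrized_tensor n H k"
    unfolding symmetrized_tensor_def
  proof (intro sum.cong refl)
    fix q
    show "(\<Prod>t<n. H ((q \<circ> s) t) (k (s t))) = (\<Prod>t<n. H (q t) (k t))"
      using prod.permute[OF s, of "\<lambda>t. H (q t) (k t)"] by (simp add: comp_def)
  qed
  finally show ?thesis .
qed

lemma gram_permanent_eq_sum_tensor: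
  "gram_permanent d n F H
     = (\<Sum>k\<in>idx d n. (\<Prod>t<n. F t (k t)) * cnj (symmetrized_tensor n H k))"
proof -
  have "gram_permanent d n F H
      = (\<Sum>q\<in>{q. q permutes {..<n}}. \<Sum>k\<in>idx d n. \<Prod>t<n. F t (k t) * cnj (H (q t) (k t)))"
    unfolding gram_permanent_def cinner_def idx_def by (intro sum.cong refl prod_sum_PiE) auto
  also have "\<dots> = (\<Sum>k\<in>idx d n. (\<Prod>t<n. F t (k t)) * cnj (symmetrized_tensor n H k))"
    unfolding symmetrized_tensor_def
    by (subst sum.swap) (simp add: prod.distrib cnj_prod cnj_sum sum_distrib_left)
  finally show ?thesis .
qed

lemma sum_tensor_permute_factors:
  assumes s: "s permutes {..<n}"
  shows "(\<Sum>k\<in>idx d n. (\<Prod>t<n. F (s t) (k t)) * cnj (symmetrized_tensor n H k))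
       = (\<Sum>k\<in>idx d n. (\<Prod>t<n. F t (k t)) * cnj (symmetrized_tensor n H k))"
proof (rule sum.reindex_bij_witness[where j="\<lambda>k. k \<circ> inv s" and i="\<lambda>k. k \<circ> s"])
  fix k assume k: "k \<in> idx d n"
  show "k \<circ> inv s \<circ> s = k" "k \<circ> s \<circ> inv s = k"
    by (simp_all add: o_assoc[symmetric] permutes_inv_o[OF s])
  show "k \<circ> s \<in> idx d n" "k \<circ> inv s \<in> idx d n"
    using comp_permutes_in_idx[OF s k] comp_permutes_in_idx[OF permutes_inv[OF s] k] .
  have "symmetrized_tensor n H (k \<circ> inv s) = symmetrized_tensor n H k"
    by (rule symmetrized_tensor_comp_permutes[OF permutes_inv[OF s]])
  moreover have "(\<Prod>t<n. F t (k (inv s t))) = (\<Prod>t<n. F (s t) (k t))"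
    using prod.permute[OF s, of "\<lambda>t. F t (k (inv s t))"] permutes_inverses(2)[OF s]
    by (simp add: comp_def)
  ultimately show "(\<Prod>t<n. F t ((k \<circ> inv s) t)) * cnj (symmetrized_tensor n H (k \<circ> inv s))
      = (\<Prod>t<n. F (s t) (k t)) * cnj (symmetrized_tensor n H k)"
    by simp
qed

lemma fact_mult_gram_permanent:
  "of_nat (fact n) * gram_permanent d n F H
     = (\<Sum>k\<in>idx d n. symmetrized_tensor n F k * cnj (symmetrized_tensor n H k))"
proof -
  have "(\<Sum>k\<in>idx d n. symmetrized_tensor n F k * cnj (symmetrized_tensor n H k))
      = (\<Sum>s\<in>{q. q permutes {..<n}}.
           \<Sum>k\<in>idx d n. (\<Prod>t<n. F (s t) (k t)) * cnj (symmetrized_tensor n H k))"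
    unfolding symmetrized_tensor_def[of n F] by (subst sum.swap) (simp add: sum_distrib_right)
  also have "\<dots> = (\<Sum>s\<in>{q. q permutes {..<n}}. gram_permanent d n F H)"
    by (intro sum.cong refl) (simp add: sum_tensor_permute_factors gram_permanent_eq_sum_tensor)
  also have "\<dots> = of_nat (fact n) * gram_permanent d n F H"
    by (simp add: card_permutations)
  finally show ?thesis by simp
qed

lemma gram_permanent_hermitian_form_nonneg:
  assumes "finite A"
  shows "0 \<le> (\<Sum>a\<in>A. \<Sum>b\<in>A. x a * cnj (x b) * gram_permanent d n (F a) (F b))"
proof -
  have "of_nat (fact n) * (\<Sum>a\<in>A. \<Sum>b\<in>A. x a * cnj (x b) * gram_permanent d n (F a) (F b))
      = (\<Sum>a\<in>A. \<Sum>b\<in>A. x a * cnj (x b) * (of_nat (fact n) * gram_permanent d n (F a) (F b)))"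
    by (simp add: sum_distrib_left algebra_simps)
  also have "\<dots> = (\<Sum>k\<in>idx d n. (\<Sum>a\<in>A. x a * symmetrized_tensor n (F a) k)
                     * cnj (\<Sum>b\<in>A. x b * symmetrized_tensor n (F b) k))"
    unfolding fact_mult_gram_permanent
    by (simp add: sum_distrib_left sum_distrib_right cnj_sum sum.swap[of _ A "idx d n"]
        algebra_simps) (rule sum.swap)
  also have "0 \<le> \<dots>"
    by (intro sum_nonneg cnj_mult_self_nonneg)
  finally have "0 \<le> of_nat (fact n)
      * (\<Sum>a\<in>A. \<Sum>b\<in>A. x a * cnj (x b) * gram_permanent d n (F a) (F b))" .
  then show ?thesis
    using fact_gt_zero[of n, where 'a=real] by (auto simp: less_eq_complex_def zero_le_mult_iff)
qed

lemma prod_transpose_last_comp: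
  assumes q: "q permutes {..<n}" and i: "i < n"
  shows "(\<Prod>t<Suc n. cinner d (f t) (f ((Transposition.transpose n (q i) \<circ> q) t)))
       = cinner d (f i) (f n) * cnj (cinner d (f (q i)) (f n))
           * (\<Prod>t\<in>{..<n}-{i}. cinner d (f t) (f (q t)))"
proof -
  let ?\<tau> = "Transposition.transpose n (q i) \<circ> q"
  have "q n = n" using permutes_not_in[OF q] by simp
  then have "(\<Prod>t<Suc n. cinner d (f t) (f (?\<tau> t)))
      = cinner d (f n) (f (q i)) * cinner d (f i) (f n)
          * (\<Prod>t\<in>{..<n}-{i}. cinner d (f t) (f (?\<tau> t)))"
    using i by (simp add: prod.remove[of "{..<n}" i])
  moreover have "?\<tau> t = q t" if "t \<in> {..<n}-{i}" for t
  proof -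
    have "q t \<noteq> q i" using that permutes_inj[OF q] by (auto dest: injD)
    moreover have "q t < n" using that permutes_in_image[OF q] by simp
    ultimately show ?thesis by (simp add: Transposition.transpose_def)
  qed
  ultimately show ?thesis
    by (simp add: cinner_cnj[of d "f n"] mult_ac)
qed

lemma gram_permanent_Suc:
  "gram_permanent d (Suc n) f f = cinner d (f n) (f n) * gram_permanent d n f f +
     (\<Sum>q\<in>{q. q permutes {..<n}}. \<Sum>i<n. cinner d (f i) (f n) * cnj (cinner d (f (q i)) (f n))
          * (\<Prod>t\<in>{..<n}-{i}. cinner d (f t) (f (q t))))"
proof -
  let ?P = "\<lambda>q. \<Prod>t<Suc n. cinner d (f t) (f (q t))"
  have lessThan_Suc: "{..<Suc n} = insert n {..<n}" by auto
  have "gram_permanent d (Suc n) f f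
      = (\<Sum>b\<in>insert n {..<n}. \<Sum>q\<in>{q. q permutes {..<n}}. ?P (Transposition.transpose n b \<circ> q))"
    unfolding gram_permanent_def lessThan_Suc
    by (subst sum_over_permutations_insert) (auto simp: lessThan_Suc)
  also have "\<dots> = (\<Sum>q\<in>{q. q permutes {..<n}}. ?P q)
      + (\<Sum>q\<in>{q. q permutes {..<n}}. \<Sum>b<n. ?P (Transposition.transpose n b \<circ> q))"
    by (simp add: sum.swap[of _ "{..<n}"])
  also have "(\<Sum>q\<in>{q. q permutes {..<n}}. ?P q) = cinner d (f n) (f n) * gram_permanent d n f f"
    unfolding gram_permanent_def sum_distrib_left
    by (intro sum.cong refl) (auto simp: permutes_not_in mult.commute)
  also have "(\<Sum>q\<in>{q. q permutes {..<n}}. \<Sum>b<n. ?P (Transposition.transpose n b \<circ> q))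
      = (\<Sum>q\<in>{q. q permutes {..<n}}. \<Sum>i<n. ?P (Transposition.transpose n (q i) \<circ> q))"
  proof (rule sum.cong[OF refl])
    fix q assume "q \<in> {q. q permutes {..<n}}"
    then have "bij_betw q {..<n} {..<n}" by (simp add: permutes_imp_bij)
    then show "(\<Sum>b<n. ?P (Transposition.transpose n b \<circ> q))
        = (\<Sum>i<n. ?P (Transposition.transpose n (q i) \<circ> q))"
      using sum.reindex_bij_betw[of q "{..<n}" "{..<n}"
          "\<lambda>b. ?P (Transposition.transpose n b \<circ> q)"] by simp
  qed
  also have "\<dots> = (\<Sum>q\<in>{q. q permutes {..<n}}. \<Sum>i<n.
      cinner d (f i) (f n) * cnj (cinner d (f (q i)) (f n)) * (\<Prod>t\<in>{..<n}-{i}. cinner d (f t) (f (q t))))"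
  proof (rule sum.cong[OF refl], rule sum.cong[OF refl])
    fix q i assume "q \<in> {q. q permutes {..<n}}" and "i \<in> {..<n}"
    then show "?P (Transposition.transpose n (q i) \<circ> q) = cinner d (f i) (f n)
        * cnj (cinner d (f (q i)) (f n)) * (\<Prod>t\<in>{..<n}-{i}. cinner d (f t) (f (q t)))"
      by (intro prod_transpose_last_comp) auto
  qed
  finally show ?thesis .
qed

text \<open>The vectors f t, padded by a zero coordinate d, except that f i is replaced by the
  unit vector of that coordinate, which is orthogonal to all the others.\<close>

definition replace_by_fresh_unit ::
    "nat \<Rightarrow> (nat \<Rightarrow> nat \<Rightarrow> complex) \<Rightarrow> nat \<Rightarrow> nat \<Rightarrow> nat \<Rightarrow> complex" where
  "replace_by_fresh_unit d f i t j =
     (if t = i then (if j = d then 1 else 0) else if j < d then f t j else 0)"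

lemma cinner_replace_by_fresh_unit:
  "cinner (Suc d) (replace_by_fresh_unit d f i t) (replace_by_fresh_unit d f i' s)
     = (if t = i then (if s = i' then 1 else 0) else if s = i' then 0 else cinner d (f t) (f s))"
  unfolding cinner_def replace_by_fresh_unit_def by simp

lemma prod_cinner_replace_by_fresh_unit:
  assumes q: "q permutes {..<n}" and i: "i < n"
  shows "(\<Prod>t<n. cinner (Suc d) (replace_by_fresh_unit d f i t) (replace_by_fresh_unit d f i' (q t)))
     = (if q i = i' then \<Prod>t\<in>{..<n}-{i}. cinner d (f t) (f (q t)) else 0)"
proof -
  let ?g = "\<lambda>t. cinner (Suc d) (replace_by_fresh_unit d f i t) (replace_by_fresh_unit d f i' (q t))"
  have split: "(\<Prod>t<n. ?g t) = ?g i * (\<Prod>t\<in>{..<n}-{i}. ?g t)"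
    using i by (simp add: prod.remove)
  show ?thesis
  proof (cases "q i = i'")
    case True
    have "?g t = cinner d (f t) (f (q t))" if "t \<in> {..<n}-{i}" for t
      using that True permutes_inj[OF q] by (auto simp: cinner_replace_by_fresh_unit dest: injD)
    then have "(\<Prod>t\<in>{..<n}-{i}. ?g t) = (\<Prod>t\<in>{..<n}-{i}. cinner d (f t) (f (q t)))"
      by (rule prod.cong[OF refl])
    with split True show ?thesis
      by (simp only: cinner_replace_by_fresh_unit) simp
  next
    case False
    with split show ?thesis
      by (simp only: cinner_replace_by_fresh_unit) simp
  qed
qed

lemma expansion_remainder_eq_hermitian_form:
  "(\<Sum>q\<in>{q. q permutes {..<n}}. \<Sum>i<n. cinner d (f i) (f n) * cnj (cinner d (f (q i)) (f n))
          * (\<Prod>t\<in>{..<n}-{i}. cinner d (f t) (f (q t))))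
   = (\<Sum>i<n. \<Sum>i'<n. cinner d (f i) (f n) * cnj (cinner d (f i') (f n))
          * gram_permanent (Suc d) n (replace_by_fresh_unit d f i) (replace_by_fresh_unit d f i'))"
proof -
  let ?c = "\<lambda>i. cinner d (f i) (f n)"
  let ?R = "\<lambda>q i. \<Prod>t\<in>{..<n}-{i}. cinner d (f t) (f (q t))"
  have "(\<Sum>i<n. \<Sum>i'<n. ?c i * cnj (?c i')
          * gram_permanent (Suc d) n (replace_by_fresh_unit d f i) (replace_by_fresh_unit d f i'))
      = (\<Sum>i<n. \<Sum>i'<n. \<Sum>q\<in>{q. q permutes {..<n}}.
           ?c i * cnj (?c i') * (if q i = i' then ?R q i else 0))"
    unfolding gram_permanent_def sum_distrib_left
    by (intro sum.cong refl) (simp add: prod_cinner_replace_by_fresh_unit)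
  also have "\<dots> = (\<Sum>q\<in>{q. q permutes {..<n}}. \<Sum>i<n. \<Sum>i'<n.
           ?c i * cnj (?c i') * (if q i = i' then ?R q i else 0))"
    by (subst sum.swap[of _ "{..<n}"], rule sum.cong[OF refl], rule sum.swap)
  also have "\<dots> = (\<Sum>q\<in>{q. q permutes {..<n}}. \<Sum>i<n. ?c i * cnj (?c (q i)) * ?R q i)"
  proof (intro sum.cong refl)
    fix q i assume "q \<in> {q. q permutes {..<n}}" and "i \<in> {..<n}"
    then have "q i < n" using permutes_in_image by fastforce
    then show "(\<Sum>i'<n. ?c i * cnj (?c i') * (if q i = i' then ?R q i else 0))
        = ?c i * cnj (?c (q i)) * ?R q i"
      by (simp add: if_distrib[of "\<lambda>x. _ * x"] sum.delta cong: if_cong)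
  qed
  finally show ?thesis by simp
qed

lemma gram_permanent_ge_prod_diag:
  "(\<Prod>t<n. cinner d (f t) (f t)) \<le> gram_permanent d n f f"
proof (induction n)
  case 0
  then show ?case by (simp add: gram_permanent_def)
next
  case (Suc n)
  have "(\<Prod>t<Suc n. cinner d (f t) (f t)) = cinner d (f n) (f n) * (\<Prod>t<n. cinner d (f t) (f t))"
    by simp
  also have "\<dots> \<le> cinner d (f n) (f n) * gram_permanent d n f f"
    by (rule mult_left_mono[OF Suc.IH cinner_self_nonneg])
  also have "\<dots> \<le> gram_permanent d (Suc n) f f"
    unfolding gram_permanent_Suc expansion_remainder_eq_hermitian_form
    using gram_permanent_hermitian_form_nonneg[of "{..<n}"] by simp
  finally show ?case .
qed

lemma restrict_comp_inv_in_idx: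
  assumes "\<pi> permutes {..<T}" and "k \<in> idx d T"
  shows "restrict (k \<circ> inv \<pi>) {..<T} \<in> idx d T"
  using assms permutes_in_image[OF permutes_inv[OF assms(1)]] unfolding idx_def
  by (auto simp: PiE_def Pi_def)

lemma trace_perm_op_tensor_proj:
  assumes p: "\<pi> permutes {..<T}"
  shows "op_trace d T (op_mult d T (perm_op T \<pi>) (tensor_proj T \<psi>))
       = (\<Prod>t<T. cinner d (\<psi> t) (\<psi> (\<pi> t)))"
proof -
  have "op_trace d T (op_mult d T (perm_op T \<pi>) (tensor_proj T \<psi>))
      = (\<Sum>k\<in>idx d T. \<Sum>i\<in>idx d T. perm_op T \<pi> i k * tensor_proj T \<psi> k i)"
    unfolding op_trace_def op_mult_def by (rule sum.swap)
  also have "\<dots> = (\<Sum>k\<in>idx d T. tensor_proj T \<psi> k (restrict (k \<circ> inv \<pi>) {..<T}))"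
    unfolding perm_op_def using restrict_comp_inv_in_idx[OF p]
    by (intro sum.cong refl) (simp add: if_distrib[of "\<lambda>x. x * _"] sum.delta cong: if_cong)
  also have "\<dots> = (\<Sum>k\<in>idx d T. \<Prod>t<T. \<psi> t (k t) * cnj (\<psi> (\<pi> t) (k t)))"
  proof (rule sum.cong[OF refl])
    fix k
    have "(\<Prod>t<T. cnj (\<psi> t (k (inv \<pi> t)))) = (\<Prod>t<T. cnj (\<psi> (\<pi> t) (k t)))"
      using prod.permute[OF p, of "\<lambda>t. cnj (\<psi> t (k (inv \<pi> t)))"] permutes_inverses(2)[OF p]
      by (simp add: comp_def)
    then show "tensor_proj T \<psi> k (restrict (k \<circ> inv \<pi>) {..<T})
        = (\<Prod>t<T. \<psi> t (k t) * cnj (\<psi> (\<pi> t) (k t)))"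
      unfolding tensor_proj_def by (simp add: prod.distrib)
  qed
  also have "\<dots> = (\<Prod>t<T. cinner d (\<psi> t) (\<psi> (\<pi> t)))"
    unfolding cinner_def idx_def by (rule prod_sum_PiE[symmetric]) auto
  finally show ?thesis .
qed

theorem mainTheorem8:
  fixes d T :: nat and \<psi> :: "nat \<Rightarrow> nat \<Rightarrow> complex"
  assumes "d \<ge> 1" and "T \<ge> 1"
    and "\<And>t. t < T \<Longrightarrow> (\<Sum>k<d. (cmod (\<psi> t k))\<^sup>2) = 1"
  shows "(\<Sum>\<pi>\<in>{\<pi>. \<pi> permutes {..<T}}.
           op_trace d T (op_mult d T (perm_op T \<pi>) (tensor_proj T \<psi>))) \<ge> 1"
proof -
  have unit: "cinner d (\<psi> t) (\<psi> t) = 1" if "t < T" for t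
    unfolding cinner_self_eq_norm_sum assms(3)[OF that] by simp
  have "(\<Sum>\<pi>\<in>{\<pi>. \<pi> permutes {..<T}}.
           op_trace d T (op_mult d T (perm_op T \<pi>) (tensor_proj T \<psi>))) = gram_permanent d T \<psi> \<psi>"
    unfolding gram_permanent_def by (intro sum.cong refl) (simp add: trace_perm_op_tensor_proj)
  moreover have "(\<Prod>t<T. cinner d (\<psi> t) (\<psi> t)) = 1"
    using unit by simp
  ultimately show ?thesis
    using gram_permanent_ge_prod_diag[where d=d and n=T and f=\<psi>] by simp
qed

end
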